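(* Let $\Phi_1,\Phi_2,\Phi_3,\Psi_1,\Psi_2,\Psi_3:\mathbb{Z}^3\to\mathbb{Q}$ be the functions defined in the context. (a) For all integers $a,b,c$ and each $i\in\{1,2,3\}$, \[ \Phi_i(a,b,c)\,\Phi_i(a-2,b-3,c-2)=\Phi_i(a-1,b-1,c)\,\Phi_i(a-1,b-2,c-2)+\Phi_i(a-2,b-2,c-1)\,\Phi_i(a,b-1,c-1) \] and \[ \Psi_i(a,b,c)\,\Psi_i(a-2,b-3,c-2)=\Psi_i(a-1,b-1,c)\,\Psi_i(a-1,b-2,c-2)+\Psi_i(a-2,b-2,c-1)\,\Psi_i(a,b-1,c-1). \] (b) For all integers $a,b,c$ and each $i\in\{1,2,3\}$, \[ \Phi_i(a,b,c)\,\Phi_i(a-2,b-3,c-2)=\Psi_{4-i}(c,b-1,a-1)\,\Phi_i(a-1,b-2,c-2)+\Phi_i(a-2,b-2,c-1)\,\Phi_i(a,b-1,c-1) \] and \[ \Psi_i(a,b,c)\,\Psi_i(a-2,b-3,c-2)=\Phi_{4-i}(c,b-1,a-1)\,\Psi_i(a-1,b-2,c-2)+\Psi_i(a-2,b-2,c-1)\,\Psi_i(a,b-1,c-1). \]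
   Context: For integers $a,b,c$ define $g(a,b,c)=(b-a)(b-c)+\left\lfloor\frac{(a-c)^2}{3}\right\rfloor$, $q(a,b,c)=\left\lfloor\frac{(a-b+c)^2}{4}\right\rfloor$, $\alpha(a,b,c)=2$ if $3b+a-c\equiv 1\pmod 6$, $\alpha(a,b,c)=3$ if $3b+a-c\equiv 5\pmod 6$, and $\alpha(a,b,c)=1$ otherwise; $\beta(a,b,c)=3$ if $3b+a-c\equiv 1\pmod 6$, $\beta(a,b,c)=2$ if $3b+a-c\equiv 5\pmod 6$, and $\beta(a,b,c)=1$ otherwise. Writing $g=g(a,b,c)$, $q=q(a,b,c)$ and $r=\lfloor (a-c+1)/3\rfloor$, define (exponents may be negative, so values are rational) $\Phi_1(a,b,c)=\alpha(a,b,c)\,2^{g(a,b,c+1)}5^{g}11^{q}$, $\Phi_2(a,b,c)=\alpha(a,b,c)\,2^{g(a,b,c-1)-r+(a-b)}5^{g}11^{q}$, $\Phi_3(a,b,c)=\alpha(a,b,c)\,2^{g(a,b,c-1)-r}5^{g}11^{q}$, $\Psi_1(a,b,c)=\beta(a,b,c)\,2^{g(a,b,c-1)}5^{g}11^{q}$, $\Psi_2(a,b,c)=\beta(a,b,c)\,2^{g(a,b,c+1)+r-(a-b)}5^{g}11^{q}$, $\Psi_3(a,b,c)=\beta(a,b,c)\,2^{g(a,b,c+1)+r}5^{g}11^{q}$. *)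

theory Defs
  imports Complex_Main
begin

definition g :: "int \<Rightarrow> int \<Rightarrow> int \<Rightarrow> int" where
  "g a b c = (b - a) * (b - c) + floor ((of_int ((a - c)^2) :: rat) / 3)"

definition q :: "int \<Rightarrow> int \<Rightarrow> int \<Rightarrow> int" where
  "q a b c = floor ((of_int ((a - b + c)^2) :: rat) / 4)"

definition r :: "int \<Rightarrow> int \<Rightarrow> int \<Rightarrow> int" where
  "r a b c = floor ((of_int (a - c + 1) :: rat) / 3)"

definition alpha :: "int \<Rightarrow> int \<Rightarrow> int \<Rightarrow> rat" where
  "alpha a b c = (if (3*b + a - c) mod 6 = 1 then 2
                  else if (3*b + a - c) mod 6 = 5 then 3 else 1)"

definition beta :: "int \<Rightarrow> int \<Rightarrow> int \<Rightarrow> rat" where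
  "beta a b c = (if (3*b + a - c) mod 6 = 1 then 3
                 else if (3*b + a - c) mod 6 = 5 then 2 else 1)"

definition common :: "int \<Rightarrow> int \<Rightarrow> int \<Rightarrow> rat" where
  "common a b c = 5 powi (g a b c) * 11 powi (q a b c)"

definition Phi1 :: "int \<Rightarrow> int \<Rightarrow> int \<Rightarrow> rat" where
  "Phi1 a b c = alpha a b c * 2 powi (g a b (c+1)) * common a b c"
definition Phi2 :: "int \<Rightarrow> int \<Rightarrow> int \<Rightarrow> rat" where
  "Phi2 a b c = alpha a b c * 2 powi (g a b (c-1) - r a b c + (a - b)) * common a b c"
definition Phi3 :: "int \<Rightarrow> int \<Rightarrow> int \<Rightarrow> rat" where
  "Phi3 a b c = alpha a b c * 2 powi (g a b (c-1) - r a b c) * common a b c"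
definition Psi1 :: "int \<Rightarrow> int \<Rightarrow> int \<Rightarrow> rat" where
  "Psi1 a b c = beta a b c * 2 powi (g a b (c-1)) * common a b c"
definition Psi2 :: "int \<Rightarrow> int \<Rightarrow> int \<Rightarrow> rat" where
  "Psi2 a b c = beta a b c * 2 powi (g a b (c+1) + r a b c - (a - b)) * common a b c"
definition Psi3 :: "int \<Rightarrow> int \<Rightarrow> int \<Rightarrow> rat" where
  "Psi3 a b c = beta a b c * 2 powi (g a b (c+1) + r a b c) * common a b c"

definition Phi :: "nat \<Rightarrow> int \<Rightarrow> int \<Rightarrow> int \<Rightarrow> rat" where
  "Phi i = (if i = 1 then Phi1 else if i = 2 then Phi2 else if i = 3 then Phi3 else (\<lambda>_ _ _. 0))"
definition Psi :: "nat \<Rightarrow> int \<Rightarrow> int \<Rightarrow> int \<Rightarrow> rat" where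
  "Psi i = (if i = 1 then Psi1 else if i = 2 then Psi2 else if i = 3 then Psi3 else (\<lambda>_ _ _. 0))"

end

theory Submission imports Defs begin

text \<open>
  Each of the six functions is a monomial \<open>C * 2^E * 5^g * 11^q\<close> whose coefficient
  \<open>C \<in> {1, 2, 3}\<close> depends only on \<open>3b + a - c\<close> modulo 6, and whose exponents are
  quadratic in \<open>(a, b, c)\<close> up to floor corrections that are periodic in \<open>a - c\<close> modulo 3.
  For each exponent, both cross terms of the recurrence exceed the main term by the same
  amount (0 for \<open>q\<close>, \<open>-1\<close> for \<open>g\<close> when \<open>3\<close> divides \<open>a - c\<close>, and \<open>-1\<close> on a single
  residue class of \<open>a - c\<close> for the exponent of 2), so the recurrence collapses to the
  coefficient identities \<open>1 = (2 + 3) / 5\<close>, \<open>2 = (1 + 3) / 2\<close> and \<open>3 = 1 + 2\<close>.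
  Part (b) follows from part (a) because the reflection \<open>(a, b, c) \<mapsto> (c, b, a)\<close>
  turns \<open>Psi (4 - i)\<close> into \<open>Phi i\<close>.
\<close>

lemma g_eq_div: "g a b c = (b - a) * (b - c) + (a - c)^2 div 3"
  unfolding g_def by (metis floor_divide_of_int_eq of_int_numeral)

lemma q_eq_div: "q a b c = (a - b + c)^2 div 4"
  unfolding q_def by (metis floor_divide_of_int_eq of_int_numeral)

lemma r_eq_div: "r a b c = (a - c + 1) div 3"
  unfolding r_def by (metis floor_divide_of_int_eq of_int_numeral)

lemma int_mod3_cases:
  obtains k where "(x::int) = 3 * k" | k where "x = 3 * k + 1" | k where "x = 3 * k + 2"
proof -
  have "x = 3 * (x div 3) + x mod 3" by simp
  moreover have "x mod 3 = 0 \<or> x mod 3 = 1 \<or> x mod 3 = 2" by presburger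
  ultimately show ?thesis using that by (metis add.right_neutral)
qed

lemma int_mod6_cases:
  fixes n :: int
  obtains "n mod 6 = 0" | "n mod 6 = 1" | "n mod 6 = 2" | "n mod 6 = 3" | "n mod 6 = 4" | "n mod 6 = 5"
proof -
  have "n mod 6 = 0 \<or> n mod 6 = 1 \<or> n mod 6 = 2 \<or> n mod 6 = 3 \<or> n mod 6 = 4 \<or> n mod 6 = 5"
    by presburger
  then show thesis using that by argo
qed

lemma three_times_square_div_3: "3 * ((x::int)^2 div 3) = x^2 - of_bool (\<not> 3 dvd x)"
proof -
  have "x mod 3 = 0 \<or> x mod 3 = 1 \<or> x mod 3 = 2" by presburger
  then have "x^2 mod 3 = of_bool (\<not> 3 dvd x)"
    by (elim disjE) (simp_all add: power_mod[of x 3 2, symmetric] dvd_eq_mod_eq_0)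
  then show ?thesis using minus_mod_eq_mult_div[of "x^2" 3] by simp
qed

lemma square_div_3_second_diff:
  "((x::int) - 1)^2 div 3 + (x + 1)^2 div 3 = 2 * (x^2 div 3) + of_bool (\<not> 3 dvd x)"
proof -
  have "of_bool (\<not> 3 dvd (x - 1)) + of_bool (\<not> 3 dvd (x + 1)) = (2::int) - of_bool (\<not> 3 dvd x)"
    unfolding of_bool_def by presburger
  then show ?thesis
    using three_times_square_div_3[of x] three_times_square_div_3[of "x - 1"]
      three_times_square_div_3[of "x + 1"]
    by (simp add: power2_eq_square algebra_simps)
qed

lemma square_div_3_diff: "((x::int) + 1)^2 div 3 - (x - 1)^2 div 3 = x + (x + 1) div 3"
proof -
  have "3 * ((x + 1) div 3) = x - of_bool (\<not> 3 dvd (x + 1)) + of_bool (\<not> 3 dvd (x - 1))"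
    unfolding of_bool_def by presburger
  then show ?thesis
    using three_times_square_div_3[of "x - 1"] three_times_square_div_3[of "x + 1"]
    by (simp add: power2_eq_square algebra_simps)
qed

lemma div_3_second_diff:
  "(x::int) div 3 + (x + 2) div 3 = 2 * ((x + 1) div 3) + of_bool (x mod 3 = 1) - of_bool (x mod 3 = 2)"
  by (cases x rule: int_mod3_cases) simp_all

lemma r_swap: "r c b a = - r a b c"
  unfolding r_eq_div by presburger

definition exponent_defect :: "(int \<Rightarrow> int \<Rightarrow> int \<Rightarrow> int) \<Rightarrow> (int \<Rightarrow> int \<Rightarrow> int \<Rightarrow> int) \<Rightarrow> bool" where
  "exponent_defect f d \<longleftrightarrow> (\<forall>a b c.
     f (a-1) (b-1) c + f (a-1) (b-2) (c-2) = f a b c + f (a-2) (b-3) (c-2) + d a b c \<and>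
     f (a-2) (b-2) (c-1) + f a (b-1) (c-1) = f a b c + f (a-2) (b-3) (c-2) + d a b c)"

lemma exponent_defect_cong:
  "exponent_defect f d \<Longrightarrow> (\<And>a b c. d a b c = d' a b c) \<Longrightarrow> exponent_defect f d'"
  unfolding exponent_defect_def by simp

lemma exponent_defect_add:
  "exponent_defect f d \<Longrightarrow> exponent_defect h e \<Longrightarrow>
    exponent_defect (\<lambda>a b c. f a b c + h a b c) (\<lambda>a b c. d a b c + e a b c)"
  unfolding exponent_defect_def by (simp add: algebra_simps)

lemma exponent_defect_diff:
  "exponent_defect f d \<Longrightarrow> exponent_defect h e \<Longrightarrow>
    exponent_defect (\<lambda>a b c. f a b c - h a b c) (\<lambda>a b c. d a b c - e a b c)"
  unfolding exponent_defect_def by (simp add: algebra_simps)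

lemma exponent_defect_diff_ab: "exponent_defect (\<lambda>a b c. a - b) (\<lambda>_ _ _. 0)"
  unfolding exponent_defect_def by simp

lemma exponent_defect_q: "exponent_defect q (\<lambda>_ _ _. 0)"
  unfolding exponent_defect_def q_eq_div by (simp add: algebra_simps)

lemma exponent_defect_g_shift:
  "exponent_defect (\<lambda>a b c. g a b (c + t)) (\<lambda>a b c. - of_bool (3 dvd (a - c - t)))"
proof -
  have "(a - 1 - (c + t))^2 div 3 + (a - 1 - (c - 2 + t))^2 div 3
          = 2 * ((a - 2 - (c - 2 + t))^2 div 3) + of_bool (\<not> 3 dvd (a - c - t))"
    "(a - 2 - (c - 1 + t))^2 div 3 + (a - (c - 1 + t))^2 div 3
          = 2 * ((a - 2 - (c - 2 + t))^2 div 3) + of_bool (\<not> 3 dvd (a - c - t))"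
    for a c :: int
    using square_div_3_second_diff[of "a - c - t"] by (simp_all add: algebra_simps)
  then show ?thesis
    unfolding exponent_defect_def g_eq_div by (simp add: algebra_simps)
qed

lemma exponent_defect_g: "exponent_defect g (\<lambda>a b c. - of_bool (3 dvd (a - c)))"
  using exponent_defect_g_shift[of 0] by simp

lemma exponent_defect_g_succ:
  "exponent_defect (\<lambda>a b c. g a b (c + 1)) (\<lambda>a b c. - of_bool ((a - c) mod 3 = 1))"
proof -
  have "3 dvd (a - c - 1) \<longleftrightarrow> (a - c) mod 3 = 1" for a c :: int by presburger
  then show ?thesis using exponent_defect_g_shift[of 1] by simp
qed

lemma exponent_defect_g_pred:
  "exponent_defect (\<lambda>a b c. g a b (c - 1)) (\<lambda>a b c. - of_bool ((a - c) mod 3 = 2))"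
proof -
  have "3 dvd (a - c + 1) \<longleftrightarrow> (a - c) mod 3 = 2" for a c :: int by presburger
  then show ?thesis using exponent_defect_g_shift[of "-1"] by simp
qed

lemma exponent_defect_r:
  "exponent_defect r (\<lambda>a b c. of_bool ((a - c) mod 3 = 1) - of_bool ((a - c) mod 3 = 2))"
proof -
  have "(a - 1 - c + 1) div 3 + (a - 1 - (c - 2) + 1) div 3
          = 2 * ((a - c + 1) div 3) + of_bool ((a - c) mod 3 = 1) - of_bool ((a - c) mod 3 = 2)"
    "(a - 2 - (c - 1) + 1) div 3 + (a - (c - 1) + 1) div 3
          = 2 * ((a - c + 1) div 3) + of_bool ((a - c) mod 3 = 1) - of_bool ((a - c) mod 3 = 2)"
    for a c :: int
    using div_3_second_diff[of "a - c"] by (simp_all add: algebra_simps)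
  then show ?thesis
    unfolding exponent_defect_def r_eq_div by (simp add: algebra_simps)
qed

lemma exponent_defect_g_pred_minus_r:
  "exponent_defect (\<lambda>a b c. g a b (c - 1) - r a b c) (\<lambda>a b c. - of_bool ((a - c) mod 3 = 1))"
  by (rule exponent_defect_cong[OF exponent_defect_diff[OF exponent_defect_g_pred exponent_defect_r]]) simp

lemma exponent_defect_g_succ_plus_r:
  "exponent_defect (\<lambda>a b c. g a b (c + 1) + r a b c) (\<lambda>a b c. - of_bool ((a - c) mod 3 = 2))"
  by (rule exponent_defect_cong[OF exponent_defect_add[OF exponent_defect_g_succ exponent_defect_r]]) simp

definition mod6_weight :: "rat \<Rightarrow> rat \<Rightarrow> int \<Rightarrow> rat" where
  "mod6_weight x y n = (if n mod 6 = 1 then x else if n mod 6 = 5 then y else 1)"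

lemma alpha_eq_mod6_weight: "alpha a b c = mod6_weight 2 3 (3*b + a - c)"
  unfolding alpha_def mod6_weight_def ..

lemma beta_eq_mod6_weight: "beta a b c = mod6_weight 3 2 (3*b + a - c)"
  unfolding beta_def mod6_weight_def ..

lemma mod6_weight_diff_mod: "mod6_weight x y (n - k) = mod6_weight x y (n mod 6 - k)"
  unfolding mod6_weight_def mod_diff_left_eq ..

lemma mod6_weight_main:
  "mod6_weight x y n * mod6_weight x y (n - 9) =
     (if n mod 3 = 0 then 1 else if n mod 3 = 1 then x else y)"
proof -
  have "n mod 3 = n mod 6 mod 3" by (simp add: mod_mod_cancel)
  then show ?thesis
    unfolding mod6_weight_diff_mod[of x y n]
    by (cases n rule: int_mod6_cases) (simp_all add: mod6_weight_def)
qed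

lemma mod6_weight_cross:
  "mod6_weight x y (n - 4) * mod6_weight x y (n - 5) + mod6_weight x y (n - 7) * mod6_weight x y (n - 2) =
     (if n mod 3 = 0 then x + y else if n mod 3 = 1 then 1 + y else 1 + x)"
proof -
  have "n mod 3 = n mod 6 mod 3" by (simp add: mod_mod_cancel)
  then show ?thesis
    unfolding mod6_weight_diff_mod[of x y n]
    by (cases n rule: int_mod6_cases) (simp_all add: mod6_weight_def)
qed

lemma mod6_weight_three_term:
  fixes W :: "int \<Rightarrow> int \<Rightarrow> int \<Rightarrow> rat"
  assumes W: "\<And>a b c. W a b c = mod6_weight x y (3*b + a - c)"
  shows "W a b c * W (a-2) (b-3) (c-2) =
           (if (a - c) mod 3 = 0 then 1 else if (a - c) mod 3 = 1 then x else y)"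
    and "W (a-1) (b-1) c * W (a-1) (b-2) (c-2) + W (a-2) (b-2) (c-1) * W a (b-1) (c-1) =
           (if (a - c) mod 3 = 0 then x + y else if (a - c) mod 3 = 1 then 1 + y else 1 + x)"
proof -
  define n where "n = 3*b + a - c"
  have "(a - c) mod 3 = n mod 3" unfolding n_def by presburger
  moreover have "W a b c = mod6_weight x y n" "W (a-2) (b-3) (c-2) = mod6_weight x y (n - 9)"
    "W (a-1) (b-1) c = mod6_weight x y (n - 4)" "W (a-1) (b-2) (c-2) = mod6_weight x y (n - 5)"
    "W (a-2) (b-2) (c-1) = mod6_weight x y (n - 7)" "W a (b-1) (c-1) = mod6_weight x y (n - 2)"
    unfolding W n_def by (simp_all add: algebra_simps)
  ultimately show "W a b c * W (a-2) (b-3) (c-2) =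
           (if (a - c) mod 3 = 0 then 1 else if (a - c) mod 3 = 1 then x else y)"
    and "W (a-1) (b-1) c * W (a-1) (b-2) (c-2) + W (a-2) (b-2) (c-1) * W a (b-1) (c-1) =
           (if (a - c) mod 3 = 0 then x + y else if (a - c) mod 3 = 1 then 1 + y else 1 + x)"
    using mod6_weight_main[of x y n] mod6_weight_cross[of x y n] by simp_all
qed

lemma alpha_three_term:
  "alpha a b c * alpha (a-2) (b-3) (c-2) =
     (alpha (a-1) (b-1) c * alpha (a-1) (b-2) (c-2) + alpha (a-2) (b-2) (c-1) * alpha a (b-1) (c-1))
     * 2 powi (- of_bool ((a - c) mod 3 = 1)) * 5 powi (- of_bool (3 dvd (a - c)))"
proof -
  have "(a - c) mod 3 = 0 \<or> (a - c) mod 3 = 1 \<or> (a - c) mod 3 = 2" by presburger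
  then show ?thesis
    using mod6_weight_three_term[OF alpha_eq_mod6_weight, of a b c]
    by (elim disjE) (simp_all add: dvd_eq_mod_eq_0)
qed

lemma beta_three_term:
  "beta a b c * beta (a-2) (b-3) (c-2) =
     (beta (a-1) (b-1) c * beta (a-1) (b-2) (c-2) + beta (a-2) (b-2) (c-1) * beta a (b-1) (c-1))
     * 2 powi (- of_bool ((a - c) mod 3 = 2)) * 5 powi (- of_bool (3 dvd (a - c)))"
proof -
  have "(a - c) mod 3 = 0 \<or> (a - c) mod 3 = 1 \<or> (a - c) mod 3 = 2" by presburger
  then show ?thesis
    using mod6_weight_three_term[OF beta_eq_mod6_weight, of a b c]
    by (elim disjE) (simp_all add: dvd_eq_mod_eq_0)
qed

lemma three_term_monomials:
  fixes u v w :: "'a::field"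
  assumes "u \<noteq> 0" "v \<noteq> 0" "w \<noteq> 0"
    and "e1 + e2 = e0 + e5 + k" "e3 + e4 = e0 + e5 + k"
    and "f1 + f2 = f0 + f5 + m" "f3 + f4 = f0 + f5 + m"
    and "h1 + h2 = h0 + h5" "h3 + h4 = h0 + h5"
    and "x0 * x5 = (x1 * x2 + x3 * x4) * u powi k * v powi m"
  shows "x0 * u powi e0 * (v powi f0 * w powi h0) * (x5 * u powi e5 * (v powi f5 * w powi h5)) =
    x1 * u powi e1 * (v powi f1 * w powi h1) * (x2 * u powi e2 * (v powi f2 * w powi h2)) +
    x3 * u powi e3 * (v powi f3 * w powi h3) * (x4 * u powi e4 * (v powi f4 * w powi h4))"
proof -
  have "x0 * u powi e0 * (v powi f0 * w powi h0) * (x5 * u powi e5 * (v powi f5 * w powi h5)) =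
      x0 * x5 * (u powi (e0 + e5) * v powi (f0 + f5) * w powi (h0 + h5))"
    using assms(1-3) by (simp add: power_int_add mult_ac)
  also have "\<dots> = (x1 * x2 + x3 * x4) * (u powi (e0 + e5 + k) * v powi (f0 + f5 + m) * w powi (h0 + h5))"
    using assms by (simp add: power_int_add mult_ac)
  also have "\<dots> = x1 * x2 * (u powi (e1 + e2) * v powi (f1 + f2) * w powi (h1 + h2)) +
      x3 * x4 * (u powi (e3 + e4) * v powi (f3 + f4) * w powi (h3 + h4))"
    by (simp only: assms(4-9) distrib_right)
  also have "\<dots> = x1 * u powi e1 * (v powi f1 * w powi h1) * (x2 * u powi e2 * (v powi f2 * w powi h2)) +
      x3 * u powi e3 * (v powi f3 * w powi h3) * (x4 * u powi e4 * (v powi f4 * w powi h4))"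
    using assms(1-3) by (simp add: power_int_add mult_ac)
  finally show ?thesis .
qed

definition three_term_recurrence :: "(int \<Rightarrow> int \<Rightarrow> int \<Rightarrow> 'a::{plus,times}) \<Rightarrow> bool" where
  "three_term_recurrence F \<longleftrightarrow> (\<forall>a b c.
     F a b c * F (a-2) (b-3) (c-2) =
       F (a-1) (b-1) c * F (a-1) (b-2) (c-2) + F (a-2) (b-2) (c-1) * F a (b-1) (c-1))"

lemma three_term_recurrence_monomial:
  fixes C :: "int \<Rightarrow> int \<Rightarrow> int \<Rightarrow> rat"
  assumes "exponent_defect E k"
    and "\<And>a b c. C a b c * C (a-2) (b-3) (c-2) =
      (C (a-1) (b-1) c * C (a-1) (b-2) (c-2) + C (a-2) (b-2) (c-1) * C a (b-1) (c-1))
      * 2 powi k a b c * 5 powi (- of_bool (3 dvd (a - c)))"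
  shows "three_term_recurrence (\<lambda>a b c. C a b c * 2 powi E a b c * common a b c)"
  unfolding three_term_recurrence_def common_def
  by (intro allI three_term_monomials[OF _ _ _ _ _ _ _ _ _ assms(2)])
    (use assms(1) exponent_defect_g exponent_defect_q in \<open>simp_all add: exponent_defect_def\<close>)

lemma three_term_recurrence_Phi1: "three_term_recurrence Phi1"
  unfolding Phi1_def[abs_def]
  by (rule three_term_recurrence_monomial[OF exponent_defect_g_succ alpha_three_term])

lemma three_term_recurrence_Phi2: "three_term_recurrence Phi2"
proof -
  have "exponent_defect (\<lambda>a b c. g a b (c - 1) - r a b c + (a - b))
                        (\<lambda>a b c. - of_bool ((a - c) mod 3 = 1))"
    by (rule exponent_defect_cong
        [OF exponent_defect_add[OF exponent_defect_g_pred_minus_r exponent_defect_diff_ab]]) simp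
  then show ?thesis
    unfolding Phi2_def[abs_def] by (rule three_term_recurrence_monomial[OF _ alpha_three_term])
qed

lemma three_term_recurrence_Phi3: "three_term_recurrence Phi3"
  unfolding Phi3_def[abs_def]
  by (rule three_term_recurrence_monomial[OF exponent_defect_g_pred_minus_r alpha_three_term])

lemma three_term_recurrence_Psi1: "three_term_recurrence Psi1"
  unfolding Psi1_def[abs_def]
  by (rule three_term_recurrence_monomial[OF exponent_defect_g_pred beta_three_term])

lemma three_term_recurrence_Psi2: "three_term_recurrence Psi2"
proof -
  have "exponent_defect (\<lambda>a b c. g a b (c + 1) + r a b c - (a - b))
                        (\<lambda>a b c. - of_bool ((a - c) mod 3 = 2))"
    by (rule exponent_defect_cong
        [OF exponent_defect_diff[OF exponent_defect_g_succ_plus_r exponent_defect_diff_ab]]) simp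
  then show ?thesis
    unfolding Psi2_def[abs_def] by (rule three_term_recurrence_monomial[OF _ beta_three_term])
qed

lemma three_term_recurrence_Psi3: "three_term_recurrence Psi3"
  unfolding Psi3_def[abs_def]
  by (rule three_term_recurrence_monomial[OF exponent_defect_g_succ_plus_r beta_three_term])

lemma g_swap: "g c b a = g a b c"
  by (simp add: g_def power2_commute mult.commute)

lemma q_swap: "q c b a = q a b c"
  by (simp add: q_def algebra_simps)

lemma beta_swap: "beta c b a = alpha a b c"
proof -
  have "(3*b + c - a) mod 6 = 1 \<longleftrightarrow> (3*b + a - c) mod 6 = 5"
    "(3*b + c - a) mod 6 = 5 \<longleftrightarrow> (3*b + a - c) mod 6 = 1" by presburger+
  then show ?thesis unfolding alpha_def beta_def by simp
qed

lemma g_succ_swap: "g c b (a + 1) + r c b a = g a b (c + 1)"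
proof -
  have "(c - (a + 1))^2 = (a - c + 1)^2" "(a - (c + 1))^2 = (a - c - 1)^2"
    by (simp_all add: power2_eq_square algebra_simps)
  then show ?thesis
    using square_div_3_diff[of "a - c"] r_swap[of c b a]
    unfolding g_eq_div r_eq_div by (simp add: algebra_simps)
qed

lemma g_succ_minus_g_pred: "g a b (c + 1) - g a b (c - 1) = a + c - 2 * b - r a b c"
proof -
  have "a - (c + 1) = a - c - 1" "a - (c - 1) = a - c + 1" by simp_all
  then show ?thesis
    using square_div_3_diff[of "a - c"]
    unfolding g_eq_div r_eq_div by (simp add: algebra_simps)
qed

lemma Psi3_swap: "Psi3 c b a = Phi1 a b c"
  unfolding Psi3_def Phi1_def common_def beta_swap g_swap[of c b a] q_swap[of c b a] g_succ_swap ..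

lemma Psi2_swap: "Psi2 c b a = Phi2 a b c"
proof -
  have exponent: "g c b (a + 1) + r c b a - (c - b) = g a b (c - 1) - r a b c + (a - b)"
    using g_succ_swap[of c b a] g_succ_minus_g_pred[of a b c] r_swap[of c b a] by simp
  show ?thesis
    unfolding Psi2_def Phi2_def common_def beta_swap g_swap[of c b a] q_swap[of c b a] exponent ..
qed

lemma Psi1_swap: "Psi1 c b a = Phi3 a b c"
proof -
  have exponent: "g c b (a - 1) = g a b (c - 1) - r a b c"
    using g_succ_swap[of "a - 1" b "c - 1"] g_swap[of "a - 1" b c] g_swap[of "c - 1" b a]
    by (simp add: r_eq_div)
  show ?thesis
    unfolding Psi1_def Phi3_def common_def beta_swap g_swap[of c b a] q_swap[of c b a] exponent ..
qed

lemma Psi_swap: "i \<in> {1, 2, 3} \<Longrightarrow> Psi (4 - i) c b a = Phi i a b c"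
  by (auto simp: Phi_def Psi_def Psi1_swap Psi2_swap Psi3_swap)

lemma Phi_swap: "i \<in> {1, 2, 3} \<Longrightarrow> Phi (4 - i) c b a = Psi i a b c"
  by (auto simp: Phi_def Psi_def Psi1_swap Psi2_swap Psi3_swap)

lemma three_term_recurrence_Phi: "i \<in> {1, 2, 3} \<Longrightarrow> three_term_recurrence (Phi i)"
  by (auto simp: Phi_def three_term_recurrence_Phi1 three_term_recurrence_Phi2
      three_term_recurrence_Phi3)

lemma three_term_recurrence_Psi: "i \<in> {1, 2, 3} \<Longrightarrow> three_term_recurrence (Psi i)"
  by (auto simp: Psi_def three_term_recurrence_Psi1 three_term_recurrence_Psi2
      three_term_recurrence_Psi3)

theorem lemma4p3:
  fixes a b c :: int and i :: nat
  assumes "i \<in> {1, 2, 3}"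
  shows "(Phi i a b c * Phi i (a-2) (b-3) (c-2) =
           Phi i (a-1) (b-1) c * Phi i (a-1) (b-2) (c-2) + Phi i (a-2) (b-2) (c-1) * Phi i a (b-1) (c-1)) \<and>
         (Psi i a b c * Psi i (a-2) (b-3) (c-2) =
           Psi i (a-1) (b-1) c * Psi i (a-1) (b-2) (c-2) + Psi i (a-2) (b-2) (c-1) * Psi i a (b-1) (c-1)) \<and>
         (Phi i a b c * Phi i (a-2) (b-3) (c-2) =
           Psi (4-i) c (b-1) (a-1) * Phi i (a-1) (b-2) (c-2) + Phi i (a-2) (b-2) (c-1) * Phi i a (b-1) (c-1)) \<and>
         (Psi i a b c * Psi i (a-2) (b-3) (c-2) =
           Phi (4-i) c (b-1) (a-1) * Psi i (a-1) (b-2) (c-2) + Psi i (a-2) (b-2) (c-1) * Psi i a (b-1) (c-1))"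
proof -
  have "three_term_recurrence (Phi i)" "three_term_recurrence (Psi i)"
    using assms by (rule three_term_recurrence_Phi three_term_recurrence_Psi)+
  moreover have "Psi (4 - i) c (b-1) (a-1) = Phi i (a-1) (b-1) c"
    and "Phi (4 - i) c (b-1) (a-1) = Psi i (a-1) (b-1) c"
    using assms by (rule Psi_swap Phi_swap)+
  ultimately show ?thesis
    unfolding three_term_recurrence_def by simp
qed

end
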